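(* Let $u$ be a bounded nonnegative function satisfying $u(x)=C_0|x|^{-\alpha}(1+o(1))$ as $|x|\to\infty$ for some $\alpha>d$ and $C_0>0$, let $(\xi_q)_{q\in\mathbb{Z}^d}$ be i.i.d. $\mathbb{R}^d$-valued random variables with $\mathbb{P}(\xi_q\in dx)=\exp(-|x|^\theta)\,dx/Z(d,\theta)$ for some $\theta>0$, and let $V_\xi(x)=\sum_{q\in\mathbb{Z}^d}u(x-q-\xi_q)$. Then there exist finite constants $c_1,c_2$ such that for all $r\ge0$, $$\mathbb{E}_\theta\Big[\exp\Big(r\sup_{x\in\Lambda_1}V_\xi(x)\Big)\Big]\le c_1\exp(c_2r^{1+d/\theta}).$$
   Context: $Z(d,\theta)$ is the normalizing constant, $\mathbb{E}_\theta$ the expectation with respect to $(\xi_q)$, and $\Lambda_1=(-1/2,1/2)^d$. *)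

theory Defs
  imports "HOL-Probability.Probability"
begin

definition lat :: "int^'d \<Rightarrow> real^'d" where
  "lat q = (\<chi> i. real_of_int (q $ i))"

definition Lambda1 :: "(real^'d) set" where
  "Lambda1 = {x. \<forall>i. -1/2 < x $ i \<and> x $ i < 1/2}"

definition theta_density :: "real \<Rightarrow> real^'d \<Rightarrow> real" where
  "theta_density \<theta> x =
     exp (- (norm x powr \<theta>)) / (LINT y|lborel. exp (- (norm (y::real^'d) powr \<theta>)))"

text \<open>The potential V_xi(x) = sum over q of u(x - q - xi_q), as a value in [0,\<infinity>]
  (the terms are nonnegative).\<close>
definition Vxi :: "(real^'d \<Rightarrow> real) \<Rightarrow> (int^'d \<Rightarrow> real^'d) \<Rightarrow> real^'d \<Rightarrow> ennreal" where
  "Vxi u xi x = (\<integral>\<^sup>+ q. ennreal (u (x - lat q - xi q)) \<partial>count_space UNIV)"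

definition exp_ennreal :: "real \<Rightarrow> ennreal \<Rightarrow> ennreal" where
  "exp_ennreal r S = (if S = \<infinity> then \<infinity> else ennreal (exp (r * enn2real S)))"

end

theory Submission
  imports Defs "HOL-Real_Asymp.Real_Asymp"
begin

text \<open>Since \<open>u\<close> is bounded by \<open>K\<close> and decays like \<open>|y|\<^sup>-\<^sup>\<alpha>\<close>, uniformly in \<open>x \<in> \<Lambda>\<^sub>1\<close> the
  \<open>q\<close>-th term of \<open>V\<^sub>\<xi>(x)\<close> is at most \<open>b\<^sub>q = B (1 + |q|)\<^sup>-\<^sup>\<alpha>\<close> when \<open>|\<xi>\<^sub>q| \<le> |q|/2\<close> and at most
  \<open>K\<close> otherwise. The dominating sum \<open>\<Sum>\<^sub>q b\<^sub>q + K 1[|\<xi>\<^sub>q| > |q|/2]\<close> no longer depends on \<open>x\<close>,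
  and its exponential moment factorises by independence. The tail bound
  \<open>P(|\<xi>\<^sub>q| > \<rho>) \<le> 2\<^sup>d\<^sup>/\<^sup>\<theta> exp (-\<rho>\<^sup>\<theta>/2)\<close> makes the factor of site \<open>q\<close> at most
  \<open>exp (r b\<^sub>q + min (r K) (2\<^sup>d\<^sup>/\<^sup>\<theta> exp (r K - (|q|/2)\<^sup>\<theta>/2)))\<close>. As \<open>\<alpha> > d\<close>, \<open>\<Sum>\<^sub>q b\<^sub>q < \<infinity>\<close>; and
  only the \<open>O(r\<^sup>d\<^sup>/\<^sup>\<theta>)\<close> sites with \<open>|q| = O(r\<^sup>1\<^sup>/\<^sup>\<theta>)\<close> contribute \<open>r K\<close> to the sum of the minima,
  the others a summable amount, which gives the exponent \<open>O(1 + r\<^sup>1\<^sup>+\<^sup>d\<^sup>/\<^sup>\<theta>)\<close>.\<close>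

section \<open>Lattice boxes\<close>

definition lattice_box :: "nat \<Rightarrow> (int^'d) set" where
  "lattice_box N = {q. \<forall>i. \<bar>q $ i\<bar> \<le> int N}"

lemma bij_betw_vec_lambda_lattice_box:
  "bij_betw vec_lambda (PiE (UNIV::'d::finite set) (\<lambda>_. {-int N..int N})) (lattice_box N :: (int^'d) set)"
  unfolding bij_betw_def
proof
  show "inj_on vec_lambda (PiE (UNIV::'d set) (\<lambda>_. {-int N..int N}))"
    by (auto simp: inj_on_def vec_lambda_inject)
  show "vec_lambda ` PiE (UNIV::'d set) (\<lambda>_. {-int N..int N}) = lattice_box N"
  proof (intro set_eqI iffI)
    fix q assume "q \<in> vec_lambda ` PiE (UNIV::'d set) (\<lambda>_. {-int N..int N})"
    then show "q \<in> lattice_box N"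
      by (auto simp: lattice_box_def PiE_iff abs_le_iff) (metis minus_le_iff)
  next
    fix q :: "int^'d" assume "q \<in> lattice_box N"
    then have "vec_nth q \<in> PiE UNIV (\<lambda>_. {-int N..int N})"
      by (force simp: lattice_box_def abs_le_iff)
    moreover have "q = vec_lambda (vec_nth q)" by simp
    ultimately show "q \<in> vec_lambda ` PiE UNIV (\<lambda>_. {-int N..int N})" by blast
  qed
qed

lemma finite_lattice_box [simp]: "finite (lattice_box N :: (int^'d::finite) set)"
  using bij_betw_finite[OF bij_betw_vec_lambda_lattice_box] by (simp add: finite_PiE)

lemma lattice_box_mono: "M \<le> N \<Longrightarrow> lattice_box M \<subseteq> lattice_box N"
  by (auto simp: lattice_box_def) (meson dual_order.trans of_nat_mono)

lemma ex_lattice_box: "\<exists>N. (q::int^'d::finite) \<in> lattice_box N"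
proof -
  have "\<bar>q $ i\<bar> \<le> int (nat (\<Sum>j\<in>UNIV. \<bar>q $ j\<bar>))" for i
    using member_le_sum[of i UNIV "\<lambda>j. \<bar>q $ j\<bar>"] by (simp add: sum_nonneg)
  then show ?thesis unfolding lattice_box_def by blast
qed

lemma sum_prod_lattice_box:
  fixes h :: "int \<Rightarrow> 'c::comm_semiring_1"
  shows "(\<Sum>q\<in>(lattice_box N :: (int^'d::finite) set). \<Prod>i\<in>UNIV. h (q $ i))
         = (\<Sum>n\<in>{-int N..int N}. h n) ^ CARD('d)"
proof -
  have "(\<Sum>q\<in>(lattice_box N :: (int^'d) set). \<Prod>i\<in>UNIV. h (q $ i))
      = (\<Sum>g\<in>PiE (UNIV::'d set) (\<lambda>_. {-int N..int N}). \<Prod>i\<in>UNIV. h (g i))"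
    by (simp add: sum.reindex_bij_betw[OF bij_betw_vec_lambda_lattice_box, symmetric])
  also have "\<dots> = (\<Prod>i\<in>(UNIV::'d set). \<Sum>n\<in>{-int N..int N}. h n)"
    by (rule prod_sum_PiE[symmetric]) auto
  finally show ?thesis by simp
qed

lemma nn_integral_count_space_eq_SUP_lattice_box:
  fixes f :: "int^'d::finite \<Rightarrow> ennreal"
  shows "(\<integral>\<^sup>+q. f q \<partial>count_space UNIV) = (SUP N. \<Sum>q\<in>lattice_box N. f q)"
proof -
  have inc: "incseq (\<lambda>N q. f q * indicator (lattice_box N) q)"
    by (auto simp: incseq_def le_fun_def indicator_def dest: lattice_box_mono[THEN subsetD])
  have "(SUP N. f q * indicator (lattice_box N) q) = f q" for q
  proof (rule antisym)
    show "(SUP N. f q * indicator (lattice_box N) q) \<le> f q"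
      by (rule SUP_least) (auto simp: indicator_def)
    obtain N where "q \<in> lattice_box N" using ex_lattice_box by blast
    then have "f q = f q * indicator (lattice_box N) q" by simp
    also have "\<dots> \<le> (SUP N. f q * indicator (lattice_box N) q)" by (rule SUP_upper) simp
    finally show "f q \<le> (SUP N. f q * indicator (lattice_box N) q)" .
  qed
  then have "(\<integral>\<^sup>+q. f q \<partial>count_space UNIV)
      = (SUP N. \<integral>\<^sup>+q. f q * indicator (lattice_box N) q \<partial>count_space UNIV)"
    using nn_integral_monotone_convergence_SUP[OF inc] by simp
  also have "\<dots> = (SUP N. \<Sum>q\<in>lattice_box N. f q)"
    by (simp add: nn_integral_count_space_indicator[symmetric] nn_integral_count_space_finite)
  finally show ?thesis .
qed

lemma sum_symmetric_interval_le:
  fixes g :: "nat \<Rightarrow> real"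
  assumes "\<And>k. 0 \<le> g k"
  shows "(\<Sum>n\<in>{-int N..int N}. g (nat \<bar>n\<bar>)) \<le> 2 * (\<Sum>k\<le>N. g k)"
proof -
  have "bij_betw int {..N} {0..int N}"
    by (rule bij_betwI[where g=nat]) auto
  from sum.reindex_bij_betw[OF this, of "\<lambda>n. g (nat \<bar>n\<bar>)"]
  have pos: "(\<Sum>n\<in>{0..int N}. g (nat \<bar>n\<bar>)) = (\<Sum>k\<le>N. g k)" by simp
  have "bij_betw (\<lambda>k. - int k) {..N} {-int N..0}"
    by (rule bij_betwI[where g="\<lambda>n. nat (- n)"]) auto
  from sum.reindex_bij_betw[OF this, of "\<lambda>n. g (nat \<bar>n\<bar>)"]
  have neg: "(\<Sum>n\<in>{-int N..0}. g (nat \<bar>n\<bar>)) = (\<Sum>k\<le>N. g k)" by simp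
  have "{-int N..int N} = {-int N..0} \<union> {0..int N}" by auto
  moreover have "(\<Sum>n\<in>{-int N..0} \<union> {0..int N}. g (nat \<bar>n\<bar>))
      = (\<Sum>n\<in>{-int N..0}. g (nat \<bar>n\<bar>)) + (\<Sum>n\<in>{0..int N}. g (nat \<bar>n\<bar>))
        - (\<Sum>n\<in>{-int N..0} \<inter> {0..int N}. g (nat \<bar>n\<bar>))"
    by (rule sum_Un) auto
  moreover have "0 \<le> (\<Sum>n\<in>{-int N..0} \<inter> {0..int N}. g (nat \<bar>n\<bar>))"
    using assms by (intro sum_nonneg)
  ultimately show ?thesis using pos neg by simp
qed

lemma abs_component_le_norm_lat: "\<bar>real_of_int (q $ i)\<bar> \<le> norm (lat q)"
  using component_le_norm_cart[of "lat q" i] by (simp add: lat_def)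

text \<open>Splitting the exponent evenly over the coordinates, \<open>(1 + |q|)\<^sup>-\<^sup>\<alpha>\<close> is dominated
  by a product of one-dimensional terms \<open>(1 + |q\<^sub>i|)\<^sup>-\<^sup>\<alpha>\<^sup>/\<^sup>d\<close>, which are summable since \<open>\<alpha>/d > 1\<close>.\<close>
lemma lattice_decay_sum_bounded:
  fixes \<alpha> :: real
  assumes "\<alpha> > real CARD('d::finite)"
  shows "\<exists>C. \<forall>N. (\<Sum>q\<in>(lattice_box N :: (int^'d) set). (1 + norm (lat q)) powr (-\<alpha>)) \<le> C"
proof -
  define \<beta> where "\<beta> = \<alpha> / real CARD('d)"
  have \<beta>: "\<beta> > 1" using assms by (simp add: \<beta>_def)
  define g where "g k = (1 + real k) powr (-\<beta>)" for k :: nat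
  have "summable (\<lambda>k. real k powr (-\<beta>))"
    using \<beta> by (simp add: summable_real_powr_iff)
  then have "summable (\<lambda>k. real (Suc k) powr (-\<beta>))"
    by (subst summable_Suc_iff)
  then have "summable g"
    unfolding g_def by simp
  have pointwise: "(1 + norm (lat q)) powr (-\<alpha>) \<le> (\<Prod>i\<in>UNIV. g (nat \<bar>q $ i\<bar>))" for q :: "int^'d"
  proof -
    have "1 + norm (lat q) \<noteq> 0" by (smt (verit) norm_ge_zero)
    then have "(1 + norm (lat q)) powr (-\<alpha>) = (\<Prod>i\<in>(UNIV::'d set). (1 + norm (lat q)) powr (-\<beta>))"
      by (simp add: \<beta>_def powr_power)
    also have "\<dots> \<le> (\<Prod>i\<in>UNIV. g (nat \<bar>q $ i\<bar>))"
      using \<beta> abs_component_le_norm_lat[of q]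
      by (intro prod_mono) (auto simp: g_def intro!: powr_mono2')
    finally show ?thesis .
  qed
  have "(\<Sum>q\<in>(lattice_box N :: (int^'d) set). (1 + norm (lat q)) powr (-\<alpha>)) \<le> (2 * suminf g) ^ CARD('d)"
    for N
  proof -
    have "(\<Sum>q\<in>(lattice_box N :: (int^'d) set). (1 + norm (lat q)) powr (-\<alpha>))
        \<le> (\<Sum>n\<in>{-int N..int N}. g (nat \<bar>n\<bar>)) ^ CARD('d)"
      unfolding sum_prod_lattice_box[symmetric] by (intro sum_mono pointwise)
    also have "\<dots> \<le> (2 * suminf g) ^ CARD('d)"
    proof (intro power_mono)
      have "(\<Sum>k\<le>N. g k) \<le> suminf g"
        by (intro sum_le_suminf \<open>summable g\<close>) (auto simp: g_def)
      then show "(\<Sum>n\<in>{-int N..int N}. g (nat \<bar>n\<bar>)) \<le> 2 * suminf g"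
        using sum_symmetric_interval_le[of g N] by (simp add: g_def)
    qed (simp add: g_def sum_nonneg)
    finally show ?thesis .
  qed
  then show ?thesis by blast
qed

lemma sum_lattice_ball_indicator_le:
  fixes L :: real
  assumes "0 \<le> L"
  shows "(\<Sum>q\<in>(lattice_box N :: (int^'d::finite) set). indicator {q. norm (lat q) < L} q)
           \<le> (2 * L + 2) ^ CARD('d)"
proof -
  define g where "g k = (indicator {k. real k < L} k :: real)" for k :: nat
  have pointwise: "indicator {q. norm (lat q) < L} q \<le> (\<Prod>i\<in>UNIV. g (nat \<bar>q $ i\<bar>))"
    for q :: "int^'d"
  proof (cases "norm (lat q) < L")
    case True
    then have "g (nat \<bar>q $ i\<bar>) = 1" for i
      using abs_component_le_norm_lat[of q i] by (simp add: g_def)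
    then show ?thesis using True by simp
  qed (simp add: g_def prod_nonneg)
  have "(\<Sum>q\<in>(lattice_box N :: (int^'d) set). indicator {q. norm (lat q) < L} q)
      \<le> (\<Sum>n\<in>{-int N..int N}. g (nat \<bar>n\<bar>)) ^ CARD('d)"
    unfolding sum_prod_lattice_box[symmetric] by (intro sum_mono pointwise)
  also have "\<dots> \<le> (2 * L + 2) ^ CARD('d)"
  proof (intro power_mono)
    have "(\<Sum>k\<le>N. g k) = real (card ({..N} \<inter> {k. real k < L}))"
      by (simp add: g_def indicator_def sum.If_cases)
    also have "card ({..N} \<inter> {k. real k < L}) \<le> card {..<nat \<lceil>L\<rceil>}"
      by (rule card_mono) (auto, linarith)
    finally have "(\<Sum>k\<le>N. g k) \<le> L + 1" using assms by simp linarith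
    then show "(\<Sum>n\<in>{-int N..int N}. g (nat \<bar>n\<bar>)) \<le> 2 * L + 2"
      using sum_symmetric_interval_le[of g N] by (simp add: g_def)
  qed (simp add: g_def sum_nonneg)
  finally show ?thesis .
qed

section \<open>Decay of the single-site potential\<close>

lemma exp_neg_powr_le_powr_decay:
  fixes c \<theta> \<alpha> :: real
  assumes "c > 0" "\<theta> > 0" "\<alpha> > 0"
  shows "\<exists>C. \<forall>s\<ge>0. exp (- c * s powr \<theta>) \<le> C * (1 + s) powr (-\<alpha>)"
proof -
  have "((\<lambda>s. (1 + s) powr \<alpha> * exp (- c * s powr \<theta>)) \<longlongrightarrow> 0) at_top"
    using assms by real_asymp
  then have "eventually (\<lambda>s. (1 + s) powr \<alpha> * exp (- c * s powr \<theta>) < 1) at_top"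
    by (rule order_tendstoD) simp
  then obtain s\<^sub>0 where s\<^sub>0: "\<And>s. s \<ge> s\<^sub>0 \<Longrightarrow> (1 + s) powr \<alpha> * exp (- c * s powr \<theta>) < 1"
    by (auto simp: eventually_at_top_linorder)
  define C where "C = max 1 ((1 + max s\<^sub>0 0) powr \<alpha>)"
  have "exp (- c * s powr \<theta>) \<le> C * (1 + s) powr (-\<alpha>)" if s: "s \<ge> 0" for s
  proof -
    have "(1 + s) powr \<alpha> * exp (- c * s powr \<theta>) \<le> C"
    proof (cases "s \<ge> s\<^sub>0")
      case True then show ?thesis using s\<^sub>0[OF True] by (simp add: C_def)
    next
      case False
      have "exp (- c * s powr \<theta>) \<le> 1" using assms s by simp
      moreover have "(1 + s) powr \<alpha> \<le> (1 + max s\<^sub>0 0) powr \<alpha>"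
        using False s assms by (intro powr_mono2) auto
      ultimately have "(1 + s) powr \<alpha> * exp (- c * s powr \<theta>) \<le> (1 + max s\<^sub>0 0) powr \<alpha> * 1"
        by (intro mult_mono) auto
      then show ?thesis by (simp add: C_def)
    qed
    moreover have "(1 + s) powr \<alpha> > 0" using s by simp
    ultimately have "exp (- c * s powr \<theta>) \<le> C / (1 + s) powr \<alpha>"
      by (simp add: field_simps)
    then show ?thesis by (simp add: powr_minus divide_inverse)
  qed
  then show ?thesis by blast
qed

lemma powr_decay_if_asymptotic:
  fixes u :: "'a::real_normed_vector \<Rightarrow> real"
  assumes "bounded (range u)" "\<alpha> > 0" "C\<^sub>0 > 0"
    and "((\<lambda>x. u x / (C\<^sub>0 * norm x powr (- \<alpha>))) \<longlongrightarrow> 1) at_infinity"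
  shows "\<exists>B\<ge>0. \<forall>y. u y \<le> B * (1 + norm y) powr (-\<alpha>)"
proof -
  obtain a where "\<And>y. \<bar>u y\<bar> \<le> a"
    using assms(1) by (auto simp: bounded_iff)
  then obtain K where K: "\<And>y. u y \<le> K" "K \<ge> 0"
    by (metis abs_ge_self abs_ge_zero order_trans)
  have "eventually (\<lambda>x. u x / (C\<^sub>0 * norm x powr (- \<alpha>)) < 2) at_infinity"
    using assms(4) by (rule order_tendstoD) simp
  then obtain R where R: "\<And>x. R \<le> norm x \<Longrightarrow> u x / (C\<^sub>0 * norm x powr (- \<alpha>)) < 2"
    by (auto simp: eventually_at_infinity)
  define R\<^sub>0 where "R\<^sub>0 = max R 1"
  define B where "B = 2 * C\<^sub>0 * 2 powr \<alpha> + K * (1 + R\<^sub>0) powr \<alpha>"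
  have "u y \<le> B * (1 + norm y) powr (-\<alpha>)" for y
  proof (cases "R\<^sub>0 \<le> norm y")
    case True
    then have y: "1 \<le> norm y" by (simp add: R\<^sub>0_def)
    have "norm y \<noteq> 0" using y by linarith
    then have "0 < C\<^sub>0 * norm y powr (-\<alpha>)" using assms(3) by simp
    then have "u y \<le> 2 * C\<^sub>0 * norm y powr (-\<alpha>)"
      using R[of y] True by (simp add: R\<^sub>0_def divide_less_eq mult.assoc)
    also have "norm y powr (-\<alpha>) \<le> ((1 + norm y) / 2) powr (-\<alpha>)"
      using y assms(2) by (intro powr_mono2') auto
    also have "((1 + norm y) / 2) powr (-\<alpha>) = 2 powr \<alpha> * (1 + norm y) powr (-\<alpha>)"
      by (simp add: powr_divide powr_minus_divide)
    finally show ?thesis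
      using assms(3) K(2) by (simp add: B_def distrib_right mult_left_mono add_increasing2)
  next
    case False
    have "(1 + norm y) powr \<alpha> \<le> (1 + R\<^sub>0) powr \<alpha>"
      using False assms(2) by (intro powr_mono2) auto
    moreover have "0 < (1 + norm y) powr \<alpha>" by (smt (verit) norm_ge_zero powr_gt_zero)
    ultimately have "1 \<le> (1 + R\<^sub>0) powr \<alpha> * (1 + norm y) powr (-\<alpha>)"
      by (simp add: powr_minus_divide le_divide_eq_1_pos)
    then have "u y \<le> K * ((1 + R\<^sub>0) powr \<alpha> * (1 + norm y) powr (-\<alpha>))"
      using K by (metis mult.right_neutral mult_left_mono order_trans)
    then show ?thesis
      using assms(3) by (simp add: B_def distrib_right mult.assoc add_increasing)
  qed
  moreover have "B \<ge> 0" using assms(3) K(2) by (simp add: B_def)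
  ultimately show ?thesis by blast
qed

lemma one_plus_norm_le_shift:
  fixes x q v :: "'a::real_normed_vector"
  assumes "norm x \<le> D" "norm v \<le> norm q / 2"
  shows "1 + norm q \<le> (2 * D + 2) * (1 + norm (x - q - v))"
proof -
  have "norm q \<le> norm (x - q - v) + norm x + norm v"
    using norm_triangle_ineq4[of x "x - q - v"] norm_triangle_ineq4[of "x - (x - q - v)" v] by simp
  moreover have "0 \<le> D" using assms(1) norm_ge_zero[of x] by linarith
  then have "0 \<le> D * norm (x - q - v)" by simp
  ultimately show ?thesis using assms by (simp add: algebra_simps)
qed

lemma norm_le_card_if_Lambda1: "x \<in> Lambda1 \<Longrightarrow> norm (x::real^'d::finite) \<le> real CARD('d)"
proof -
  assume "x \<in> Lambda1"
  then have "\<bar>x $ i\<bar> \<le> 1" for i by (auto simp: Lambda1_def abs_le_iff dest: spec[of _ i])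
  then have "(\<Sum>i\<in>UNIV. \<bar>x $ i\<bar>) \<le> (\<Sum>i\<in>(UNIV::'d set). 1)" by (intro sum_mono)
  then show ?thesis using norm_le_l1_cart[of x] by simp
qed

text \<open>For \<open>|\<eta>\<^sub>q| \<le> |q|/2\<close> the point \<open>x - q - \<eta>\<^sub>q\<close> stays at distance comparable to \<open>|q|\<close>, so its
  term decays like \<open>|q|\<^sup>-\<^sup>\<alpha>\<close>; every displaced site is charged the full bound \<open>K\<close>.\<close>
lemma SUP_Vxi_le_dominant:
  fixes u :: "real^'d::finite \<Rightarrow> real" and \<eta> :: "int^'d \<Rightarrow> real^'d"
  assumes K: "\<And>y. u y \<le> K" and decay: "\<And>y. u y \<le> B * (1 + norm y) powr (-\<alpha>)"
    and "0 \<le> B" "0 \<le> \<alpha>"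
  shows "(SUP x\<in>Lambda1. Vxi u \<eta> x)
    \<le> (\<integral>\<^sup>+q. ennreal (B * (2 * real CARD('d) + 2) powr \<alpha> * (1 + norm (lat q)) powr (-\<alpha>)
                      + K * indicator {y. norm (lat q) / 2 < norm y} (\<eta> q)) \<partial>count_space UNIV)"
  unfolding Vxi_def
proof (intro SUP_least nn_integral_mono ennreal_leI)
  fix x :: "real^'d" and q :: "int^'d" assume x: "x \<in> Lambda1"
  define c where "c = 2 * real CARD('d) + 2"
  have "0 \<le> B * c powr \<alpha> * (1 + norm (lat q)) powr (-\<alpha>)" using assms(3) by simp
  moreover have "u (x - lat q - \<eta> q) \<le> B * c powr \<alpha> * (1 + norm (lat q)) powr (-\<alpha>)"
    if \<eta>: "norm (\<eta> q) \<le> norm (lat q) / 2"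
  proof -
    have "1 + norm (lat q) \<le> c * (1 + norm (x - lat q - \<eta> q))"
      unfolding c_def by (rule one_plus_norm_le_shift[OF norm_le_card_if_Lambda1[OF x] \<eta>])
    then have "(1 + norm (x - lat q - \<eta> q)) powr (-\<alpha>) \<le> ((1 + norm (lat q)) / c) powr (-\<alpha>)"
      using assms(4) by (intro powr_mono2') (auto simp: c_def field_simps add_pos_nonneg)
    also have "\<dots> = c powr \<alpha> * (1 + norm (lat q)) powr (-\<alpha>)"
      by (simp add: c_def powr_divide powr_minus_divide)
    finally show ?thesis
      using decay[of "x - lat q - \<eta> q"] assms(3) by (simp add: mult.assoc order_trans mult_left_mono)
  qed
  ultimately show "u (x - lat q - \<eta> q)
      \<le> B * (2 * real CARD('d) + 2) powr \<alpha> * (1 + norm (lat q)) powr (-\<alpha>)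
         + K * indicator {y. norm (lat q) / 2 < norm y} (\<eta> q)"
    using K[of "x - lat q - \<eta> q"] by (auto simp: c_def indicator_def not_less)
qed

section \<open>Exponential moments\<close>

lemma (in prob_space) nn_integral_density_eq_1_if_distributed:
  assumes "distributed M N X f"
  shows "(\<integral>\<^sup>+x. f x \<partial>N) = 1"
proof -
  have "X \<in> measurable M N" using assms by (rule distributed_measurable)
  then have "X -` space N \<inter> space M = space M" by (auto dest: measurable_space)
  then have "emeasure (distr M N X) (space N) = 1"
    using \<open>X \<in> measurable M N\<close> by (simp add: emeasure_distr emeasure_space_1)
  then show ?thesis
    using assms by (simp add: distributed_distr_eq_density emeasure_density distributed_borel_measurable)
qed

text \<open>Substituting \<open>x = 2\<^sup>1\<^sup>/\<^sup>\<theta> y\<close> turns \<open>exp (-|x|\<^sup>\<theta>/2)\<close> into \<open>exp (-|y|\<^sup>\<theta>)\<close>, at the cost of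
  the Jacobian \<open>2\<^sup>d\<^sup>/\<^sup>\<theta>\<close>.\<close>
lemma (in prob_space) nn_integral_exp_half_norm_powr:
  fixes X :: "'a \<Rightarrow> real^'d::finite"
  assumes \<theta>: "\<theta> > 0" and X: "distributed M lborel X (\<lambda>x. ennreal (theta_density \<theta> x))"
  shows "(\<integral>\<^sup>+\<omega>. ennreal (exp (norm (X \<omega>) powr \<theta> / 2)) \<partial>M) = ennreal (2 powr (real CARD('d) / \<theta>))"
proof -
  define Z where "Z = (LINT y|lborel. exp (- (norm (y::real^'d) powr \<theta>)))"
  define h where "h x = ennreal (exp (- (norm x powr \<theta>) / 2) / Z)" for x :: "real^'d"
  define l where "l = 2 powr (1 / \<theta>)"
  have l: "l > 0" by (simp add: l_def)
  have h_scaled: "ennreal (\<bar>l\<bar> ^ DIM(real^'d)) * h (0 + l *\<^sub>R y)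
      = ennreal (2 powr (real CARD('d) / \<theta>)) * ennreal (theta_density \<theta> y)" for y :: "real^'d"
  proof -
    have "norm (l *\<^sub>R y) powr \<theta> = 2 * norm y powr \<theta>"
      using l \<theta> by (simp add: powr_mult l_def powr_powr)
    moreover have "\<bar>l\<bar> ^ DIM(real^'d) = 2 powr (real CARD('d) / \<theta>)"
      using l by (simp add: l_def powr_power)
    ultimately show ?thesis by (simp add: h_def theta_density_def Z_def)
  qed
  have "(\<integral>\<^sup>+\<omega>. ennreal (exp (norm (X \<omega>) powr \<theta> / 2)) \<partial>M)
      = (\<integral>\<^sup>+x. ennreal (theta_density \<theta> (x::real^'d)) * ennreal (exp (norm x powr \<theta> / 2)) \<partial>lborel)"
    using X by (intro distributed_nn_integral[symmetric]) auto
  also have "\<dots> = (\<integral>\<^sup>+x. h x \<partial>lborel)"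
    by (intro nn_integral_cong)
       (simp add: h_def theta_density_def Z_def ennreal_mult''[symmetric] flip: exp_add)
  also have "\<dots> = (\<integral>\<^sup>+x. h x \<partial>density (distr lborel borel (\<lambda>x. 0 + l *\<^sub>R x))
                            (\<lambda>_. ennreal (\<bar>l\<bar> ^ DIM(real^'d))))"
    by (rule arg_cong[where f="\<lambda>N. nn_integral N h"], rule lborel_affine) (use l in simp)
  also have "\<dots> = (\<integral>\<^sup>+y. ennreal (\<bar>l\<bar> ^ DIM(real^'d)) * h (0 + l *\<^sub>R y) \<partial>lborel)"
    by (simp add: nn_integral_density nn_integral_distr h_def)
  also have "\<dots> = (\<integral>\<^sup>+y. ennreal (2 powr (real CARD('d) / \<theta>)) * ennreal (theta_density \<theta> (y::real^'d)) \<partial>lborel)"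
    by (rule nn_integral_cong) (rule h_scaled)
  also have "\<dots> = ennreal (2 powr (real CARD('d) / \<theta>)) * (\<integral>\<^sup>+y. ennreal (theta_density \<theta> (y::real^'d)) \<partial>lborel)"
    using distributed_borel_measurable[OF X] by (rule nn_integral_cmult)
  finally show ?thesis
    using nn_integral_density_eq_1_if_distributed[OF X] by simp
qed

text \<open>Chebyshev's inequality with the moment \<open>\<int> exp (|X|\<^sup>\<theta>/2) = 2\<^sup>d\<^sup>/\<^sup>\<theta>\<close> controls the step.\<close>
lemma (in prob_space) nn_integral_exp_step_le:
  fixes X :: "'a \<Rightarrow> real^'d::finite"
  assumes \<theta>: "\<theta> > 0" and X: "distributed M lborel X (\<lambda>x. ennreal (theta_density \<theta> x))"
    and "0 \<le> r" "0 \<le> K" "0 \<le> \<rho>"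
  defines "\<Psi> \<equiv> 2 powr (real CARD('d) / \<theta>)"
  shows "(\<integral>\<^sup>+\<omega>. ennreal (exp (r * (b + K * indicator {x. \<rho> < norm x} (X \<omega>)))) \<partial>M)
    \<le> ennreal (exp (r * b + min (r * K) (\<Psi> * exp (r * K - \<rho> powr \<theta> / 2))))"
proof -
  have [measurable]: "X \<in> borel_measurable M"
    using distributed_measurable[OF X] by simp
  define c where "c = exp (r * b + r * K - \<rho> powr \<theta> / 2)"
  have pointwise: "exp (r * (b + K * indicator {x. \<rho> < norm x} x))
      \<le> exp (r * b) + c * exp (norm x powr \<theta> / 2)" for x :: "real^'d"
  proof (cases "\<rho> < norm x")
    case True
    then have "\<rho> powr \<theta> \<le> norm x powr \<theta>" using assms by (intro powr_mono2) auto
    then have "exp (r * (b + K)) \<le> c * exp (norm x powr \<theta> / 2)"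
      by (simp add: c_def algebra_simps flip: exp_add)
    then show ?thesis using True by (simp add: add_increasing)
  qed (simp add: c_def)
  have "(\<integral>\<^sup>+\<omega>. ennreal (exp (r * (b + K * indicator {x. \<rho> < norm x} (X \<omega>)))) \<partial>M)
      \<le> (\<integral>\<^sup>+\<omega>. ennreal (exp (r * b)) + ennreal c * ennreal (exp (norm (X \<omega>) powr \<theta> / 2)) \<partial>M)"
  proof (intro nn_integral_mono)
    fix \<omega>
    have "ennreal (exp (r * b)) + ennreal c * ennreal (exp (norm (X \<omega>) powr \<theta> / 2))
        = ennreal (exp (r * b) + c * exp (norm (X \<omega>) powr \<theta> / 2))"
      by (simp add: c_def ennreal_plus ennreal_mult)
    then show "ennreal (exp (r * (b + K * indicator {x. \<rho> < norm x} (X \<omega>))))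
        \<le> ennreal (exp (r * b)) + ennreal c * ennreal (exp (norm (X \<omega>) powr \<theta> / 2))"
      using pointwise by (simp add: ennreal_leI)
  qed
  also have "\<dots> = ennreal (exp (r * b)) + ennreal c * ennreal \<Psi>"
    using nn_integral_exp_half_norm_powr[OF \<theta> X]
    by (simp add: nn_integral_add nn_integral_cmult emeasure_space_1 \<Psi>_def)
  also have "\<dots> = ennreal (exp (r * b) * (1 + \<Psi> * exp (r * K - \<rho> powr \<theta> / 2)))"
    by (simp add: c_def \<Psi>_def algebra_simps exp_add exp_diff flip: ennreal_plus ennreal_mult)
  also have "\<dots> \<le> ennreal (exp (r * b + \<Psi> * exp (r * K - \<rho> powr \<theta> / 2)))"
    by (intro ennreal_leI) (simp add: exp_add exp_ge_add_one_self)
  finally have tail: "(\<integral>\<^sup>+\<omega>. ennreal (exp (r * (b + K * indicator {x. \<rho> < norm x} (X \<omega>)))) \<partial>M)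
      \<le> ennreal (exp (r * b + \<Psi> * exp (r * K - \<rho> powr \<theta> / 2)))" .
  have "(\<integral>\<^sup>+\<omega>. ennreal (exp (r * (b + K * indicator {x. \<rho> < norm x} (X \<omega>)))) \<partial>M)
      \<le> (\<integral>\<^sup>+\<omega>. ennreal (exp (r * b + r * K)) \<partial>M)"
    using assms(3,4) by (intro nn_integral_mono) (auto simp: indicator_def distrib_left)
  then have trivial: "(\<integral>\<^sup>+\<omega>. ennreal (exp (r * (b + K * indicator {x. \<rho> < norm x} (X \<omega>)))) \<partial>M)
      \<le> ennreal (exp (r * b + r * K))"
    by (simp add: emeasure_space_1)
  show ?thesis
    by (cases "r * K \<le> \<Psi> * exp (r * K - \<rho> powr \<theta> / 2)") (use tail trivial in \<open>auto simp: min_def\<close>)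
qed

lemma (in prob_space) nn_integral_exp_sum_indep:
  assumes "indep_vars (\<lambda>_. borel) \<xi> I" "finite I" "\<And>q. q \<in> I \<Longrightarrow> a q \<in> borel_measurable borel"
  shows "(\<integral>\<^sup>+\<omega>. ennreal (exp (r * (\<Sum>q\<in>I. a q (\<xi> q \<omega>)))) \<partial>M)
    = (\<Prod>q\<in>I. \<integral>\<^sup>+\<omega>. ennreal (exp (r * a q (\<xi> q \<omega>))) \<partial>M)"
proof -
  have "indep_vars (\<lambda>_. borel) (\<lambda>q \<omega>. ennreal (exp (r * a q (\<xi> q \<omega>)))) I"
    using assms(1) by (rule indep_vars_compose2) (use assms(3) in measurable)
  moreover have "(\<integral>\<^sup>+\<omega>. ennreal (exp (r * (\<Sum>q\<in>I. a q (\<xi> q \<omega>)))) \<partial>M)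
      = (\<integral>\<^sup>+\<omega>. (\<Prod>q\<in>I. ennreal (exp (r * a q (\<xi> q \<omega>)))) \<partial>M)"
    using assms(2) by (simp add: sum_distrib_left exp_sum prod_ennreal)
  ultimately show ?thesis
    using assms(2) by (simp add: indep_vars_nn_integral)
qed

lemma exp_ennreal_mono:
  assumes "0 \<le> r" "s \<le> t"
  shows "exp_ennreal r s \<le> exp_ennreal r t"
proof (cases "t = \<infinity>")
  case False
  then have "s \<noteq> \<infinity>" "enn2real s \<le> enn2real t"
    using assms(2) by (auto simp: top_unique less_top intro: enn2real_mono)
  then show ?thesis
    using False assms(1) by (auto simp: exp_ennreal_def intro!: ennreal_leI mult_left_mono)
qed (simp add: exp_ennreal_def)

lemma exp_ennreal_mono_exponent:
  assumes "0 \<le> r" "r \<le> r'"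
  shows "exp_ennreal r s \<le> exp_ennreal r' s"
  using assms by (auto simp: exp_ennreal_def intro!: ennreal_leI mult_right_mono)

lemma exp_ennreal_SUP:
  fixes s :: "nat \<Rightarrow> real"
  assumes "r > 0" "incseq s" "\<And>N. 0 \<le> s N"
  shows "exp_ennreal r (SUP N. ennreal (s N)) = (SUP N. ennreal (exp (r * s N)))"
proof (cases "(SUP N. ennreal (s N)) = \<infinity>")
  case True
  have exp_SUP: "(SUP N. ennreal (exp (r * s N))) = top"
  proof (subst SUP_eq_top_iff, intro allI impI)
    fix x :: ennreal assume "x < top"
    then obtain y where y: "x = ennreal y" "0 \<le> y" by (cases x) auto
    from True obtain N where "ennreal (y / r) < ennreal (s N)"
      by (metis SUP_eq_top_iff UNIV_I ennreal_less_top infinity_ennreal_def)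
    then have "y / r < s N" by (metis ennreal_leI not_less)
    then have "y < r * s N" using assms(1) by (simp add: field_simps)
    also have "r * s N < exp (r * s N)" by (smt (verit) exp_ge_add_one_self)
    finally show "\<exists>N\<in>UNIV. x < ennreal (exp (r * s N))" using y by (auto simp: ennreal_less_iff)
  qed
  then show ?thesis by (simp add: exp_ennreal_def True exp_SUP del: SUP_eq_top_iff)
next
  case False
  define L where "L = enn2real (SUP N. ennreal (s N))"
  have SL: "(SUP N. ennreal (s N)) = ennreal L" "0 \<le> L"
    unfolding L_def by (metis False ennreal_enn2real_if infinity_ennreal_def) simp
  have "(\<lambda>N. ennreal (s N)) \<longlonglongrightarrow> ennreal L"
    unfolding SL(1)[symmetric] using assms(2)
    by (intro LIMSEQ_SUP) (auto simp: incseq_def intro!: ennreal_leI)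
  then have "s \<longlonglongrightarrow> L" using assms(3) SL(2) by (simp add: tendsto_ennreal_iff)
  then have "(\<lambda>N. ennreal (exp (r * s N))) \<longlonglongrightarrow> ennreal (exp (r * L))"
    by (intro tendsto_ennrealI tendsto_intros)
  moreover have "(\<lambda>N. ennreal (exp (r * s N))) \<longlonglongrightarrow> (SUP N. ennreal (exp (r * s N)))"
    using assms(1,2) by (intro LIMSEQ_SUP) (auto simp: incseq_def intro!: ennreal_leI mult_left_mono)
  ultimately have "(SUP N. ennreal (exp (r * s N))) = ennreal (exp (r * L))"
    using LIMSEQ_unique by blast
  then show ?thesis using SL by (simp add: exp_ennreal_def)
qed

text \<open>Exhausting the lattice by the finite boxes reduces the exponential moment of the whole sum
  to those of finite sums, which factorise by independence.\<close>
lemma (in prob_space) nn_integral_exp_lattice_sum_le: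
  fixes \<xi> :: "int^'d::finite \<Rightarrow> 'a \<Rightarrow> 'b::topological_space" and a :: "int^'d \<Rightarrow> 'b \<Rightarrow> real"
  assumes indep: "indep_vars (\<lambda>_. borel) \<xi> UNIV" and "r > 0"
    and a_nonneg: "\<And>q y. 0 \<le> a q y" and a_meas: "\<And>q. a q \<in> borel_measurable borel"
    and site: "\<And>q. (\<integral>\<^sup>+\<omega>. ennreal (exp (r * a q (\<xi> q \<omega>))) \<partial>M) \<le> ennreal (exp (w q))"
    and sum: "\<And>N. (\<Sum>q\<in>lattice_box N. w q) \<le> T"
  shows "(\<integral>\<^sup>+\<omega>. exp_ennreal r (\<integral>\<^sup>+q. ennreal (a q (\<xi> q \<omega>)) \<partial>count_space UNIV) \<partial>M) \<le> ennreal (exp T)"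
proof -
  have [measurable]: "\<xi> q \<in> borel_measurable M" "a q \<in> borel_measurable borel" for q
    using indep a_meas by (auto simp: indep_vars_def)
  define S where "S N \<omega> = (\<Sum>q\<in>lattice_box N. a q (\<xi> q \<omega>))" for N \<omega>
  have inc: "incseq (\<lambda>N. S N \<omega>)" for \<omega>
    by (auto simp: S_def incseq_def intro!: sum_mono2 lattice_box_mono a_nonneg)
  have S_nonneg: "0 \<le> S N \<omega>" for N \<omega>
    by (simp add: S_def sum_nonneg a_nonneg)
  have "(\<integral>\<^sup>+\<omega>. exp_ennreal r (\<integral>\<^sup>+q. ennreal (a q (\<xi> q \<omega>)) \<partial>count_space UNIV) \<partial>M)
      = (\<integral>\<^sup>+\<omega>. (SUP N. ennreal (exp (r * S N \<omega>))) \<partial>M)"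
    using \<open>r > 0\<close> inc S_nonneg
    by (simp add: nn_integral_count_space_eq_SUP_lattice_box a_nonneg S_def exp_ennreal_SUP)
  also have "\<dots> = (SUP N. \<integral>\<^sup>+\<omega>. ennreal (exp (r * S N \<omega>)) \<partial>M)"
  proof (rule nn_integral_monotone_convergence_SUP)
    show "incseq (\<lambda>N \<omega>. ennreal (exp (r * S N \<omega>)))"
      using inc \<open>r > 0\<close> by (auto simp: incseq_def le_fun_def intro!: ennreal_leI mult_left_mono)
  qed (unfold S_def, measurable)
  also have "\<dots> \<le> ennreal (exp T)"
  proof (rule SUP_least)
    fix N
    have "(\<integral>\<^sup>+\<omega>. ennreal (exp (r * S N \<omega>)) \<partial>M)
        = (\<Prod>q\<in>lattice_box N. \<integral>\<^sup>+\<omega>. ennreal (exp (r * a q (\<xi> q \<omega>))) \<partial>M)"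
      unfolding S_def using indep_vars_subset[OF indep]
      by (intro nn_integral_exp_sum_indep) (auto simp: a_meas)
    also have "\<dots> \<le> (\<Prod>q\<in>lattice_box N. ennreal (exp (w q)))"
      by (intro prod_mono_ennreal site)
    also have "\<dots> = ennreal (exp (\<Sum>q\<in>lattice_box N. w q))"
      by (simp add: prod_ennreal exp_sum)
    also have "\<dots> \<le> ennreal (exp T)"
      using sum by (intro ennreal_leI) simp
    finally show "(\<integral>\<^sup>+\<omega>. ennreal (exp (r * S N \<omega>)) \<partial>M) \<le> ennreal (exp T)" .
  qed
  finally show ?thesis .
qed

section \<open>Summing the site exponents\<close>

lemma power_add_le_two_power:
  fixes a b :: real
  assumes "0 \<le> a" "0 \<le> b"
  shows "(a + b) ^ n \<le> 2 ^ n * (a ^ n + b ^ n)"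
proof -
  have "(a + b) ^ n \<le> (2 * max a b) ^ n"
    using assms by (intro power_mono) auto
  also have "\<dots> = 2 ^ n * max a b ^ n" by (simp add: power_mult_distrib)
  also have "max a b ^ n \<le> a ^ n + b ^ n"
    using assms by (cases "a \<le> b") (auto simp: max_def)
  finally show ?thesis by (simp add: mult_left_mono)
qed

lemma le_one_plus_powr:
  fixes r p :: real
  assumes "0 < r" "1 \<le> p"
  shows "r \<le> 1 + r powr p"
proof (cases "r \<le> 1")
  case False
  then have "r powr 1 \<le> r powr p" using assms by (intro powr_mono) auto
  then show ?thesis using assms by simp
qed (smt (verit) powr_ge_zero)

lemma mult_powr_poly_le:
  fixes A C \<theta> :: real
  assumes "\<theta> > 0" "0 \<le> A" "0 \<le> C"
  shows "\<exists>c\<^sub>0 c\<^sub>2. \<forall>r>0. r * (A * r powr (1 / \<theta>) + C) ^ n \<le> c\<^sub>0 + c\<^sub>2 * r powr (1 + real n / \<theta>)"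
proof -
  define p where "p = 1 + real n / \<theta>"
  have p: "1 \<le> p" using assms(1) by (simp add: p_def)
  have "r * (A * r powr (1 / \<theta>) + C) ^ n \<le> 2 ^ n * C ^ n + 2 ^ n * (A ^ n + C ^ n) * r powr p"
    if r: "r > 0" for r
  proof -
    have "r * (A * r powr (1 / \<theta>) + C) ^ n \<le> r * (2 ^ n * ((A * r powr (1 / \<theta>)) ^ n + C ^ n))"
      using r assms by (intro mult_left_mono power_add_le_two_power) auto
    also have "\<dots> = 2 ^ n * A ^ n * (r * r powr (real n / \<theta>)) + 2 ^ n * C ^ n * r"
      using r by (simp add: power_mult_distrib powr_power algebra_simps)
    also have "r * r powr (real n / \<theta>) = r powr p"
      using r by (simp add: p_def powr_add)
    also have "2 ^ n * C ^ n * r \<le> 2 ^ n * C ^ n * (1 + r powr p)"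
      using assms(3) le_one_plus_powr[OF r p] by (intro mult_left_mono) auto
    finally show ?thesis by (simp add: algebra_simps)
  qed
  then show ?thesis unfolding p_def by blast
qed

text \<open>Sites with \<open>|q| < L = 2 (4 r K)\<^sup>1\<^sup>/\<^sup>\<theta>\<close> contribute at most \<open>r K\<close> each and there are
  \<open>O(L\<^sup>d)\<close> of them; beyond \<open>L\<close> the exponent is at most \<open>-(|q|/2)\<^sup>\<theta>/4\<close>, which is summable.\<close>
lemma lattice_sum_min_le:
  fixes \<theta> \<alpha> K \<Psi> :: real
  assumes \<theta>: "\<theta> > 0" and \<alpha>: "\<alpha> > real CARD('d::finite)" and K: "0 \<le> K" and \<Psi>: "0 \<le> \<Psi>"
  shows "\<exists>c\<^sub>0 c\<^sub>2. \<forall>r>0. \<forall>N.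
    (\<Sum>q\<in>(lattice_box N :: (int^'d) set). min (r * K) (\<Psi> * exp (r * K - (norm (lat q) / 2) powr \<theta> / 2)))
      \<le> c\<^sub>0 + c\<^sub>2 * r powr (1 + real CARD('d) / \<theta>)"
proof -
  have "\<alpha> > 0" using \<alpha> of_nat_0_le_iff[of "CARD('d)"] by linarith
  obtain C\<^sub>\<alpha> where C\<^sub>\<alpha>: "\<And>N. (\<Sum>q\<in>(lattice_box N :: (int^'d) set). (1 + norm (lat q)) powr (-\<alpha>)) \<le> C\<^sub>\<alpha>"
    using lattice_decay_sum_bounded[OF \<alpha>] by blast
  define c where "c = 1 / (4 * 2 powr \<theta>)"
  have "c > 0" by (simp add: c_def)
  then obtain C\<^sub>e where C\<^sub>e: "\<And>s. 0 \<le> s \<Longrightarrow> exp (- c * s powr \<theta>) \<le> C\<^sub>e * (1 + s) powr (-\<alpha>)"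
    using exp_neg_powr_le_powr_decay[OF _ \<theta> \<open>\<alpha> > 0\<close>] by blast
  have "0 \<le> C\<^sub>e" using C\<^sub>e[of 0] by simp
  define A where "A = 4 * (4 * K) powr (1 / \<theta>)"
  obtain c\<^sub>0 c\<^sub>2 where poly: "\<And>r. r > 0 \<Longrightarrow>
      r * (A * r powr (1 / \<theta>) + 2) ^ CARD('d) \<le> c\<^sub>0 + c\<^sub>2 * r powr (1 + real CARD('d) / \<theta>)"
    using mult_powr_poly_le[OF \<theta>, of A 2 "CARD('d)"] by (force simp: A_def)
  have "(\<Sum>q\<in>(lattice_box N :: (int^'d) set). min (r * K) (\<Psi> * exp (r * K - (norm (lat q) / 2) powr \<theta> / 2)))
      \<le> (K * c\<^sub>0 + \<Psi> * (C\<^sub>e * C\<^sub>\<alpha>)) + K * c\<^sub>2 * r powr (1 + real CARD('d) / \<theta>)" if r: "r > 0" for r N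
  proof -
    define L where "L = 2 * (4 * r * K) powr (1 / \<theta>)"
    have "(4 * r * K) powr (1 / \<theta>) = (4 * K) powr (1 / \<theta>) * r powr (1 / \<theta>)"
      using r K by (simp add: powr_mult[symmetric] mult_ac)
    then have L: "0 \<le> L" "2 * L + 2 = A * r powr (1 / \<theta>) + 2"
      by (simp_all add: L_def A_def)
    have pointwise: "min (r * K) (\<Psi> * exp (r * K - (norm (lat q) / 2) powr \<theta> / 2))
        \<le> r * K * indicator {q. norm (lat q) < L} q + \<Psi> * exp (- c * norm (lat q) powr \<theta>)" for q
    proof (cases "norm (lat q) < L")
      case False
      then have "((4 * r * K) powr (1 / \<theta>)) powr \<theta> \<le> (norm (lat q) / 2) powr \<theta>"
        using \<theta> by (intro powr_mono2) (auto simp: L_def)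
      moreover have "((4 * r * K) powr (1 / \<theta>)) powr \<theta> = 4 * r * K"
        using \<theta> r K by (simp add: powr_powr)
      ultimately have "4 * r * K \<le> (norm (lat q) / 2) powr \<theta>"
        by simp
      moreover have "(norm (lat q) / 2) powr \<theta> = 4 * (c * norm (lat q) powr \<theta>)"
        by (simp add: c_def powr_divide)
      ultimately have "r * K - (norm (lat q) / 2) powr \<theta> / 2 \<le> - c * norm (lat q) powr \<theta>"
        by linarith
      then have "\<Psi> * exp (r * K - (norm (lat q) / 2) powr \<theta> / 2) \<le> \<Psi> * exp (- c * norm (lat q) powr \<theta>)"
        using \<Psi> by (intro mult_left_mono) auto
      then show ?thesis using False by (simp add: min_le_iff_disj)
    qed (simp add: min_le_iff_disj \<Psi>)
    have "(\<Sum>q\<in>(lattice_box N :: (int^'d) set). indicator {q. norm (lat q) < L} q) \<le> (2 * L + 2) ^ CARD('d)"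
      by (rule sum_lattice_ball_indicator_le[OF L(1)])
    then have "r * K * (\<Sum>q\<in>(lattice_box N :: (int^'d) set). indicator {q. norm (lat q) < L} q)
        \<le> r * K * (2 * L + 2) ^ CARD('d)"
      using r K by (intro mult_left_mono) auto
    also have "\<dots> = K * (r * (A * r powr (1 / \<theta>) + 2) ^ CARD('d))"
      by (simp add: L(2))
    also have "\<dots> \<le> K * (c\<^sub>0 + c\<^sub>2 * r powr (1 + real CARD('d) / \<theta>))"
      using poly[OF r] K by (rule mult_left_mono)
    finally have balls: "r * K * (\<Sum>q\<in>(lattice_box N :: (int^'d) set). indicator {q. norm (lat q) < L} q)
        \<le> K * (c\<^sub>0 + c\<^sub>2 * r powr (1 + real CARD('d) / \<theta>))" .
    have "(\<Sum>q\<in>(lattice_box N :: (int^'d) set). exp (- c * norm (lat q) powr \<theta>))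
        \<le> (\<Sum>q\<in>(lattice_box N :: (int^'d) set). C\<^sub>e * (1 + norm (lat q)) powr (-\<alpha>))"
      by (intro sum_mono C\<^sub>e) simp
    also have "\<dots> \<le> C\<^sub>e * C\<^sub>\<alpha>"
      unfolding sum_distrib_left[symmetric] using C\<^sub>\<alpha>[of N] \<open>0 \<le> C\<^sub>e\<close> by (rule mult_left_mono)
    finally have far: "\<Psi> * (\<Sum>q\<in>(lattice_box N :: (int^'d) set). exp (- c * norm (lat q) powr \<theta>)) \<le> \<Psi> * (C\<^sub>e * C\<^sub>\<alpha>)"
      using \<Psi> by (rule mult_left_mono)
    have "(\<Sum>q\<in>(lattice_box N :: (int^'d) set). min (r * K) (\<Psi> * exp (r * K - (norm (lat q) / 2) powr \<theta> / 2)))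
        \<le> (\<Sum>q\<in>(lattice_box N :: (int^'d) set).
              r * K * indicator {q. norm (lat q) < L} q + \<Psi> * exp (- c * norm (lat q) powr \<theta>))"
      by (intro sum_mono pointwise)
    also have "\<dots> = r * K * (\<Sum>q\<in>(lattice_box N :: (int^'d) set). indicator {q. norm (lat q) < L} q)
          + \<Psi> * (\<Sum>q\<in>(lattice_box N :: (int^'d) set). exp (- c * norm (lat q) powr \<theta>))"
      by (simp only: sum.distrib sum_distrib_left)
    finally show ?thesis using balls far by (simp add: algebra_simps)
  qed
  then show ?thesis by blast
qed

lemma exp_powr_bound_extend_to_zero:
  fixes F :: "real \<Rightarrow> ennreal"
  assumes mono: "\<And>r r'. 0 \<le> r \<Longrightarrow> r \<le> r' \<Longrightarrow> F r \<le> F r'"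
    and pos: "\<And>r. 0 < r \<Longrightarrow> F r \<le> ennreal (exp (c\<^sub>0 + c\<^sub>2 * r powr p))"
  shows "\<exists>c\<^sub>1 c\<^sub>2. \<forall>r\<ge>0. F r \<le> ennreal (c\<^sub>1 * exp (c\<^sub>2 * r powr p))"
proof -
  define c where "c = max c\<^sub>2 0"
  have "F r \<le> ennreal (exp (c\<^sub>0 + c) * exp (c * r powr p))" if "0 \<le> r" for r
  proof (cases "r = 0")
    case True
    have "F r \<le> F 1" using mono True by simp
    also have "\<dots> \<le> ennreal (exp (c\<^sub>0 + c\<^sub>2))" using pos[of 1] by simp
    also have "\<dots> \<le> ennreal (exp (c\<^sub>0 + c) * exp (c * r powr p))"
      using True by (intro ennreal_leI) (simp add: c_def)
    finally show ?thesis .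
  next
    case False
    have "c\<^sub>2 * r powr p \<le> c * r powr p" by (simp add: c_def mult_right_mono)
    then have "exp (c\<^sub>0 + c\<^sub>2 * r powr p) \<le> exp (c\<^sub>0 + c) * exp (c * r powr p)"
      by (simp add: c_def flip: exp_add)
    moreover have "0 < r" using False that by simp
    ultimately show ?thesis using pos[of r] by (meson ennreal_leI order_trans)
  qed
  then show ?thesis by blast
qed

lemma (in prob_space) exp_moment_lattice_dominant_le:
  fixes \<xi> :: "int^'d::finite \<Rightarrow> 'a \<Rightarrow> real^'d"
  assumes \<theta>: "\<theta> > 0" and \<alpha>: "\<alpha> > real CARD('d)" and B: "0 \<le> B" and K: "0 \<le> K"
    and indep: "indep_vars (\<lambda>_. borel) \<xi> UNIV"
    and distr: "\<And>q. distributed M lborel (\<xi> q) (\<lambda>x. ennreal (theta_density \<theta> x))"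
  shows "\<exists>c\<^sub>0 c\<^sub>2. \<forall>r>0.
    (\<integral>\<^sup>+\<omega>. exp_ennreal r (\<integral>\<^sup>+q. ennreal (B * (1 + norm (lat q)) powr (-\<alpha>)
                                    + K * indicator {y. norm (lat q) / 2 < norm y} (\<xi> q \<omega>))
                         \<partial>count_space UNIV) \<partial>M)
      \<le> ennreal (exp (c\<^sub>0 + c\<^sub>2 * r powr (1 + real CARD('d) / \<theta>)))"
proof -
  define p where "p = 1 + real CARD('d) / \<theta>"
  have "1 \<le> p" using \<theta> by (simp add: p_def)
  define b where "b q = B * (1 + norm (lat q)) powr (-\<alpha>)" for q :: "int^'d"
  define a where "a q y = b q + K * indicator {y. norm (lat q) / 2 < norm y} y"
    for q :: "int^'d" and y :: "real^'d"
  define \<Psi> where "\<Psi> = 2 powr (real CARD('d) / \<theta>)"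
  obtain C\<^sub>\<alpha> where "\<And>N. (\<Sum>q\<in>(lattice_box N :: (int^'d) set). (1 + norm (lat q)) powr (-\<alpha>)) \<le> C\<^sub>\<alpha>"
    using lattice_decay_sum_bounded[OF \<alpha>] by blast
  then have b_sum: "(\<Sum>q\<in>lattice_box N. b q) \<le> B * C\<^sub>\<alpha>" for N
    using B by (simp add: b_def sum_distrib_left[symmetric] mult_left_mono)
  have "0 \<le> B * C\<^sub>\<alpha>" using b_sum[of 0] B sum_nonneg[of "lattice_box 0" b] by (simp add: b_def)
  obtain c\<^sub>0 c\<^sub>2 where tail: "\<And>r N. 0 < r \<Longrightarrow>
      (\<Sum>q\<in>(lattice_box N :: (int^'d) set). min (r * K) (\<Psi> * exp (r * K - (norm (lat q) / 2) powr \<theta> / 2)))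
        \<le> c\<^sub>0 + c\<^sub>2 * r powr p"
    using lattice_sum_min_le[OF \<theta> \<alpha> K, of \<Psi>] by (auto simp: \<Psi>_def p_def)
  have [measurable]: "{y::real^'d. c < norm y} \<in> sets borel" for c
    by (intro borel_open open_Collect_less continuous_intros)
  have "(\<integral>\<^sup>+\<omega>. exp_ennreal r (\<integral>\<^sup>+q. ennreal (a q (\<xi> q \<omega>)) \<partial>count_space UNIV) \<partial>M)
      \<le> ennreal (exp ((B * C\<^sub>\<alpha> + c\<^sub>0) + (B * C\<^sub>\<alpha> + c\<^sub>2) * r powr p))" if r: "0 < r" for r
  proof (rule nn_integral_exp_lattice_sum_le[OF indep r])
    show "0 \<le> a q y" for q y using K B by (simp add: a_def b_def)
    show "a q \<in> borel_measurable borel" for q unfolding a_def by measurable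
    show "(\<integral>\<^sup>+\<omega>. ennreal (exp (r * a q (\<xi> q \<omega>))) \<partial>M)
        \<le> ennreal (exp (r * b q + min (r * K) (\<Psi> * exp (r * K - (norm (lat q) / 2) powr \<theta> / 2))))" for q
      unfolding a_def \<Psi>_def using r K by (intro nn_integral_exp_step_le[OF \<theta> distr]) auto
    have "r * (\<Sum>q\<in>lattice_box N. b q) \<le> B * C\<^sub>\<alpha> * (1 + r powr p)" for N
    proof -
      have "r * (\<Sum>q\<in>lattice_box N. b q) \<le> r * (B * C\<^sub>\<alpha>)"
        using b_sum[of N] r by simp
      also have "\<dots> \<le> B * C\<^sub>\<alpha> * (1 + r powr p)"
        using mult_right_mono[OF le_one_plus_powr[OF r \<open>1 \<le> p\<close>] \<open>0 \<le> B * C\<^sub>\<alpha>\<close>]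
        by (simp add: mult.commute)
      finally show ?thesis .
    qed
    note b_part = this
    show "(\<Sum>q\<in>lattice_box N. r * b q + min (r * K) (\<Psi> * exp (r * K - (norm (lat q) / 2) powr \<theta> / 2)))
        \<le> (B * C\<^sub>\<alpha> + c\<^sub>0) + (B * C\<^sub>\<alpha> + c\<^sub>2) * r powr p" for N
      using b_part[of N] tail[OF r, of N] by (simp add: sum.distrib sum_distrib_left[symmetric] algebra_simps)
  qed
  then show ?thesis unfolding a_def b_def p_def by blast
qed

theorem lemma7p2:
  fixes u :: "real^'d \<Rightarrow> real"
    and \<alpha> C\<^sub>0 \<theta> :: real
    and M :: "'w measure"
    and \<xi> :: "int^'d \<Rightarrow> 'w \<Rightarrow> real^'d"
  assumes u_bounded: "bounded (range u)"
    and u_nonneg: "\<And>x. 0 \<le> u x"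
    and alpha: "\<alpha> > real CARD('d)"
    and C0: "C\<^sub>0 > 0"
    and u_asymp: "((\<lambda>x. u x / (C\<^sub>0 * norm x powr (- \<alpha>))) \<longlongrightarrow> 1) at_infinity"
    and theta: "\<theta> > 0"
    and P: "prob_space M"
    and indep: "prob_space.indep_vars M (\<lambda>_. borel) \<xi> UNIV"
    and distr: "\<And>q. distributed M lborel (\<xi> q) (\<lambda>x. ennreal (theta_density \<theta> x))"
  shows "\<exists>c\<^sub>1 c\<^sub>2 :: real. \<forall>r \<ge> 0.
           (\<integral>\<^sup>+ \<omega>. exp_ennreal r (SUP x\<in>Lambda1. Vxi u (\<lambda>q. \<xi> q \<omega>) x) \<partial>M)
             \<le> ennreal (c\<^sub>1 * exp (c\<^sub>2 * r powr (1 + real CARD('d) / \<theta>)))"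
proof -
  interpret prob_space M by (rule P)
  have "\<alpha> > 0" using alpha of_nat_0_le_iff[of "CARD('d)"] by linarith
  obtain K where "\<And>y. \<bar>u y\<bar> \<le> K" using u_bounded by (auto simp: bounded_iff)
  then have K: "\<And>y. u y \<le> K" "0 \<le> K" by (meson abs_ge_self abs_ge_zero order_trans)+
  obtain B where B: "0 \<le> B" "\<And>y. u y \<le> B * (1 + norm y) powr (-\<alpha>)"
    using powr_decay_if_asymptotic[OF u_bounded \<open>\<alpha> > 0\<close> C0 u_asymp] by blast
  define B' where "B' = B * (2 * real CARD('d) + 2) powr \<alpha>"
  have "0 \<le> B'" using B(1) by (simp add: B'_def)
  have dominated: "(SUP x\<in>Lambda1. Vxi u (\<lambda>q. \<xi> q \<omega>) x)
      \<le> (\<integral>\<^sup>+q. ennreal (B' * (1 + norm (lat q)) powr (-\<alpha>)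
                          + K * indicator {y. norm (lat q) / 2 < norm y} (\<xi> q \<omega>)) \<partial>count_space UNIV)"
    for \<omega>
    using SUP_Vxi_le_dominant[OF K(1) B(2) B(1)] \<open>\<alpha> > 0\<close> by (simp add: B'_def)
  obtain c\<^sub>0 c\<^sub>2 where moment: "\<And>r. 0 < r \<Longrightarrow>
      (\<integral>\<^sup>+\<omega>. exp_ennreal r (\<integral>\<^sup>+q. ennreal (B' * (1 + norm (lat q)) powr (-\<alpha>)
                            + K * indicator {y. norm (lat q) / 2 < norm y} (\<xi> q \<omega>)) \<partial>count_space UNIV) \<partial>M)
        \<le> ennreal (exp (c\<^sub>0 + c\<^sub>2 * r powr (1 + real CARD('d) / \<theta>)))"
    using exp_moment_lattice_dominant_le[OF theta alpha \<open>0 \<le> B'\<close> K(2) indep distr] by blast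
  show ?thesis
  proof (rule exp_powr_bound_extend_to_zero)
    show "(\<integral>\<^sup>+\<omega>. exp_ennreal r (SUP x\<in>Lambda1. Vxi u (\<lambda>q. \<xi> q \<omega>) x) \<partial>M)
        \<le> (\<integral>\<^sup>+\<omega>. exp_ennreal r' (SUP x\<in>Lambda1. Vxi u (\<lambda>q. \<xi> q \<omega>) x) \<partial>M)" if "0 \<le> r" "r \<le> r'" for r r'
      using that by (intro nn_integral_mono exp_ennreal_mono_exponent)
    show "(\<integral>\<^sup>+\<omega>. exp_ennreal r (SUP x\<in>Lambda1. Vxi u (\<lambda>q. \<xi> q \<omega>) x) \<partial>M)
        \<le> ennreal (exp (c\<^sub>0 + c\<^sub>2 * r powr (1 + real CARD('d) / \<theta>)))" if "0 < r" for r
      using that dominated by (intro order_trans[OF nn_integral_mono moment]) (auto intro: exp_ennreal_mono)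
  qed
qed

end
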